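(* Let $k\ge2$ and let $G=(\{a,b\},\varphi,a)$ be a circular D0L-system with $\varphi$ $k$-uniform. Then the graph of overhangs $GO_G$ does not contain two distinct vertices $s_1,s_2$, each carrying a loop, together with an edge from $s_1$ to $s_2$.
   Context: A D0L-system $G=(\mathcal{A},\varphi,w)$ has $L(G)=\{\varphi^n(w)\}$ and $S(L(G))$ the set of factors of its words. An interpretation of $u\in S(L(G))$ is $(p,v,s)$ with $v\in S(L(G))$, $\varphi(v)=pus$. With $v=v_1\cdots v_n$, $v'=v'_1\cdots v'_m$, $u=u_1\cdots u_\ell$, interpretations $(p,v,s),(p',v',s')$ are synchronized at position $j$ if $\varphi(v_1\cdots v_i)=pu_1\cdots u_j$ and $\varphi(v'_1\cdots v'_{i'})=p'u_1\cdots u_j$ for some $i,i'$; $u$ has a synchronizing point at $j$ if all its interpretations are pairwise synchronized at $j$. A PD0L-system injective on $S(L(G))$ is circular if there is $Z$ such that every $u\in S(L(G))$ with $|u|>Z$ has a synchronizing point. $\varphi$ is $k$-uniform if $|\varphi(a)|=|\varphi(b)|=k$. Let $X=\{\varphi(a),\varphi(b)\}$. An overhang is a triple $(u_1\cdots u_m,v_1\cdots v_n,|x|)$ with $u_i,v_j\in X$, $x$ nonempty, such that: (i) $x$ is a suffix of $u_1\cdots u_m$ but not of $u_2\cdots u_m$; (ii) $x$ is a prefix of $v_1\cdots v_n$ but not of $v_1\cdots v_{n-1}$; (iii) $x\ne u_1\cdots u_m$ or $x\ne v_1\cdots v_n$; (iv) $|v_1\cdots v_{n-1}|<|x(u_2\cdots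 u_m)^{-1}|$. Its left overhang is $u_1\cdots u_mx^{-1}$, right overhang $x^{-1}v_1\cdots v_n$. $GO_G$ has an edge from $s_1$ to $s_2$ labelled by each overhang with left overhang $s_1$ and right overhang $s_2$. *)

theory Defs
  imports Main "HOL-Library.Sublist"
begin

datatype letter = A | B

definition morph :: "(letter \<Rightarrow> letter list) \<Rightarrow> letter list \<Rightarrow> letter list" where
  "morph \<phi> w = concat (map \<phi> w)"

definition lang :: "(letter \<Rightarrow> letter list) \<Rightarrow> letter list \<Rightarrow> letter list set" where
  "lang \<phi> w = range (\<lambda>n. (morph \<phi> ^^ n) w)"

definition factors :: "letter list set \<Rightarrow> letter list set" where
  "factors L = {u. \<exists>p s. p @ u @ s \<in> L}"

definition interp :: "(letter \<Rightarrow> letter list) \<Rightarrow> letter list \<Rightarrow> letter list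
      \<Rightarrow> letter list \<times> letter list \<times> letter list \<Rightarrow> bool" where
  "interp \<phi> w u I = (case I of (p, v, s) \<Rightarrow>
       v \<in> factors (lang \<phi> w) \<and> morph \<phi> v = p @ u @ s)"

definition sync_at :: "(letter \<Rightarrow> letter list) \<Rightarrow> letter list \<Rightarrow> nat
      \<Rightarrow> letter list \<times> letter list \<times> letter list
      \<Rightarrow> letter list \<times> letter list \<times> letter list \<Rightarrow> bool" where
  "sync_at \<phi> u j I I' = (case I of (p, v, s) \<Rightarrow> case I' of (p', v', s') \<Rightarrow>
       (\<exists>i i'. i \<le> length v \<and> i' \<le> length v' \<and>
          morph \<phi> (take i v) = p @ take j u \<and>
          morph \<phi> (take i' v') = p' @ take j u))"

definition sync_point :: "(letter \<Rightarrow> letter list) \<Rightarrow> letter list \<Rightarrow> letter list \<Rightarrow> nat \<Rightarrow> bool" where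
  "sync_point \<phi> w u j = (j \<le> length u \<and>
       (\<forall>I I'. interp \<phi> w u I \<and> interp \<phi> w u I' \<longrightarrow> sync_at \<phi> u j I I'))"

definition circular :: "(letter \<Rightarrow> letter list) \<Rightarrow> letter list \<Rightarrow> bool" where
  "circular \<phi> w = ((\<forall>c. \<phi> c \<noteq> []) \<and>
       inj_on (morph \<phi>) (factors (lang \<phi> w)) \<and>
       (\<exists>Z::nat. \<forall>u \<in> factors (lang \<phi> w). length u > Z \<longrightarrow> (\<exists>j. sync_point \<phi> w u j)))"

definition uniform :: "(letter \<Rightarrow> letter list) \<Rightarrow> nat \<Rightarrow> bool" where
  "uniform \<phi> k = (length (\<phi> A) = k \<and> length (\<phi> B) = k)"

definition overhang :: "(letter \<Rightarrow> letter list) \<Rightarrow> letter list list \<Rightarrow> letter list list \<Rightarrow> nat \<Rightarrow> bool" where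
  "overhang \<phi> us vs l = (us \<noteq> [] \<and> vs \<noteq> [] \<and>
     set us \<subseteq> {\<phi> A, \<phi> B} \<and> set vs \<subseteq> {\<phi> A, \<phi> B} \<and>
     (\<exists>x. x \<noteq> [] \<and> length x = l \<and>
        suffix x (concat us) \<and> \<not> suffix x (concat (tl us)) \<and>
        prefix x (concat vs) \<and> \<not> prefix x (concat (butlast vs)) \<and>
        (x \<noteq> concat us \<or> x \<noteq> concat vs) \<and>
        length (concat (butlast vs)) < length x - length (concat (tl us))))"

definition left_overhang :: "letter list list \<Rightarrow> nat \<Rightarrow> letter list" where
  "left_overhang us l = take (length (concat us) - l) (concat us)"

definition right_overhang :: "letter list list \<Rightarrow> nat \<Rightarrow> letter list" where
  "right_overhang vs l = drop l (concat vs)"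

definition GO_edge :: "(letter \<Rightarrow> letter list) \<Rightarrow> letter list \<Rightarrow> letter list \<Rightarrow> bool" where
  "GO_edge \<phi> s1 s2 = (\<exists>us vs l. overhang \<phi> us vs l \<and>
       left_overhang us l = s1 \<and> right_overhang vs l = s2)"

end

theory Submission
  imports Defs
begin

text \<open>For a uniform morphism every overhang is made of a single image word on each side, so an
  edge of the graph of overhangs from s to t says that s x and x t are images of letters for some
  nonempty overlap x. Two loops at s1 and s2 and an edge s1 \<rightarrow> s2 then force the two images to be
  both of the forms s1 x1, s2 x2 and of the forms x1 s1, x1 s2; going through the possible
  matchings, s1 and s2 both commute with x1 or both with x1 x1, and words of equal length that
  commute with the same nonempty word are equal.\<close>

lemma commute_concat_replicate:
  assumes "s @ w = w @ s"
  shows "s @ concat (replicate n w) = concat (replicate n w) @ s"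
proof (induction n)
  case 0
  then show ?case by simp
next
  case (Suc n)
  have "s @ concat (replicate (Suc n) w) = (s @ w) @ concat (replicate n w)" by simp
  also have "\<dots> = w @ (s @ concat (replicate n w))" using assms by simp
  also have "\<dots> = concat (replicate (Suc n) w) @ s" using Suc by simp
  finally show ?case .
qed

lemma commute_eq_take_power:
  assumes "s @ w = w @ s" and "w \<noteq> []"
  shows "s = take (length s) (concat (replicate (length s) w))"
proof -
  let ?R = "concat (replicate (length s) w)"
  have "length s \<le> length ?R"
    using assms(2) by (cases w) (simp_all add: length_concat sum_list_replicate)
  have "s = take (length s) (s @ ?R)" by simp
  also have "\<dots> = take (length s) (?R @ s)" using commute_concat_replicate[OF assms(1)] by simp
  also have "\<dots> = take (length s) ?R" using \<open>length s \<le> length ?R\<close> by simp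
  finally show ?thesis .
qed

lemma commute_same_word_eq:
  assumes "s @ w = w @ s" and "t @ w = w @ t" and "length s = length t" and "w \<noteq> []"
  shows "s = t"
  using commute_eq_take_power[OF assms(1,4)] commute_eq_take_power[OF assms(2,4)] assms(3)
  by metis

lemma uniform_length_concat:
  assumes "uniform \<phi> k" and "set xs \<subseteq> {\<phi> A, \<phi> B}"
  shows "length (concat xs) = k * length xs"
  using assms(2) by (induction xs) (use assms(1) in \<open>auto simp: uniform_def\<close>)

lemma overhang_uniform_singletons:
  assumes "uniform \<phi> k" and "overhang \<phi> us vs l"
  obtains u v x where "us = [u]" and "vs = [v]" and "u \<in> {\<phi> A, \<phi> B}" and "v \<in> {\<phi> A, \<phi> B}"
    and "x \<noteq> []" and "length x = l" and "suffix x u" and "prefix x v"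
proof -
  obtain x where ne: "us \<noteq> []" "vs \<noteq> []" and su: "set us \<subseteq> {\<phi> A, \<phi> B}"
    and sv: "set vs \<subseteq> {\<phi> A, \<phi> B}" and x: "x \<noteq> []" "length x = l"
    "suffix x (concat us)" "prefix x (concat vs)"
    and iv: "length (concat (butlast vs)) < length x - length (concat (tl us))"
    using assms(2) unfolding overhang_def by blast
  have "set (tl us) \<subseteq> {\<phi> A, \<phi> B}" using su by (cases us) auto
  then have len_tl: "length (concat (tl us)) = k * (length us - 1)"
    using uniform_length_concat[OF assms(1)] by simp
  have len_butlast: "length (concat (butlast vs)) = k * (length vs - 1)"
    using uniform_length_concat[OF assms(1), of "butlast vs"] sv by (auto dest: in_set_butlastD)
  have "length x \<le> k * length us"
    using suffix_length_le[OF x(3)] uniform_length_concat[OF assms(1) su] by simp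
  also have "\<dots> = k + length (concat (tl us))"
    using ne(1) len_tl by (cases us) auto
  finally have "k * (length vs - 1) < k"
    using iv len_butlast by linarith
  then have "length vs = 1" using ne(2) by (cases "length vs") auto
  then obtain v where v: "vs = [v]" by (auto simp: length_Suc_conv)
  have "length x \<le> k"
    using prefix_length_le[OF x(4)] uniform_length_concat[OF assms(1) sv] v by simp
  then have "k * (length us - 1) < k" using iv len_tl by linarith
  then have "length us = 1" using ne(1) by (cases "length us") auto
  then obtain u where u: "us = [u]" by (auto simp: length_Suc_conv)
  show thesis using that u v su sv x by simp
qed

lemma GO_edge_uniform:
  assumes "uniform \<phi> k" and "GO_edge \<phi> s t"
  obtains x where "x \<noteq> []" and "length s + length x = k" and "length t + length x = k"
    and "s @ x \<in> {\<phi> A, \<phi> B}" and "x @ t \<in> {\<phi> A, \<phi> B}"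
proof -
  obtain us vs l where o: "overhang \<phi> us vs l" and s: "s = left_overhang us l"
    and t: "t = right_overhang vs l"
    using assms(2) unfolding GO_edge_def by blast
  obtain u v x where "us = [u]" and "vs = [v]" and u: "u \<in> {\<phi> A, \<phi> B}"
    and v: "v \<in> {\<phi> A, \<phi> B}" and "x \<noteq> []" and "length x = l"
    and "suffix x u" and "prefix x v"
    using overhang_uniform_singletons[OF assms(1) o] .
  moreover have "length u = k" "length v = k"
    using u v assms(1) by (auto simp: uniform_def)
  moreover have "s @ x = u"
    using s \<open>us = [u]\<close> \<open>length x = l\<close> suffix_take[OF \<open>suffix x u\<close>]
    by (simp add: left_overhang_def)
  moreover have "x @ t = v"
    using t \<open>vs = [v]\<close> \<open>length x = l\<close> \<open>prefix x v\<close>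
    by (auto simp: right_overhang_def prefix_def)
  ultimately show thesis
    using that[of x] by (metis length_append add.commute)
qed

lemma two_loops_and_edge_impossible:
  assumes "s1 \<noteq> s2" and "length s1 = length s2" and "length x1 = length y"
    and "length x2 = length y" and "y \<noteq> []"
    and "s1 @ x1 \<in> {P, Q}" and "x1 @ s1 \<in> {P, Q}" and "s2 @ x2 \<in> {P, Q}"
    and "x2 @ s2 \<in> {P, Q}" and "s1 @ y \<in> {P, Q}" and "y @ s2 \<in> {P, Q}"
  shows False
proof -
  have PQ_right: "{P, Q} = {s1 @ x1, s2 @ x2}"
    using assms(1,2,6,8) by auto
  then have "y = x1" using assms(1,2,10) by auto
  then have PQ_left: "{P, Q} = {x1 @ s1, x1 @ s2}"
    using assms(1,7,11) by auto
  then have "x2 = x1" using assms(3,4,9) \<open>y = x1\<close> by auto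
  have x1: "x1 \<noteq> []" using \<open>y = x1\<close> assms(5) by simp
  have c1: "s1 @ x1 = x1 @ s1 \<or> s1 @ x1 = x1 @ s2"
    and c2: "s2 @ x1 = x1 @ s1 \<or> s2 @ x1 = x1 @ s2"
    using PQ_right PQ_left \<open>x2 = x1\<close> by blast+
  consider "s1 @ x1 = x1 @ s1" "s2 @ x1 = x1 @ s2" | "s1 @ x1 = x1 @ s2" "s2 @ x1 = x1 @ s1"
    using c1 c2 assms(1) by (metis append_same_eq)
  then show False
  proof cases
    case 1
    then show False using commute_same_word_eq[OF _ _ assms(2) x1] assms(1) by blast
  next
    case 2
    then have "s1 @ x1 @ x1 = (x1 @ x1) @ s1" "s2 @ x1 @ x1 = (x1 @ x1) @ s2"
      by (metis append_assoc)+
    then show False using commute_same_word_eq[OF _ _ assms(2), of "x1 @ x1"] x1 assms(1) by simp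
  qed
qed

theorem mainTheorem8:
  fixes \<phi> :: "letter \<Rightarrow> letter list" and k :: nat
  assumes "k \<ge> 2" and "circular \<phi> [A]" and "uniform \<phi> k"
  shows "\<not> (\<exists>s1 s2. s1 \<noteq> s2 \<and> GO_edge \<phi> s1 s1 \<and> GO_edge \<phi> s2 s2 \<and> GO_edge \<phi> s1 s2)"
proof
  assume "\<exists>s1 s2. s1 \<noteq> s2 \<and> GO_edge \<phi> s1 s1 \<and> GO_edge \<phi> s2 s2 \<and> GO_edge \<phi> s1 s2"
  then obtain s1 s2 where "s1 \<noteq> s2" and loop1: "GO_edge \<phi> s1 s1"
    and loop2: "GO_edge \<phi> s2 s2" and edge: "GO_edge \<phi> s1 s2" by blast
  obtain x1 where "length s1 + length x1 = k"
    "s1 @ x1 \<in> {\<phi> A, \<phi> B}" "x1 @ s1 \<in> {\<phi> A, \<phi> B}"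
    using GO_edge_uniform[OF assms(3) loop1] by metis
  moreover obtain x2 where "length s2 + length x2 = k"
    "s2 @ x2 \<in> {\<phi> A, \<phi> B}" "x2 @ s2 \<in> {\<phi> A, \<phi> B}"
    using GO_edge_uniform[OF assms(3) loop2] by metis
  moreover obtain y where "y \<noteq> []" "length s1 + length y = k" "length s2 + length y = k"
    "s1 @ y \<in> {\<phi> A, \<phi> B}" "y @ s2 \<in> {\<phi> A, \<phi> B}"
    using GO_edge_uniform[OF assms(3) edge] by metis
  ultimately show False
    using two_loops_and_edge_impossible[OF \<open>s1 \<noteq> s2\<close>, of x1 y x2 "\<phi> A" "\<phi> B"]
    by simp
qed

end
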